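(* Let $v:=u_3-u_0$. There is a constant $C>0$ such that for every point $p=(z,y)\in X$ with $0<y\le 1$ and every $0<r\le y/4$, writing $B_r$ for the ball of radius $r$ centered at $p$, $$\int_{B_r}|\nabla v|^2\le C\, r\, y^2 .$$
   Context: $X=\mathbb{R}^2\times(0,+\infty)$ with coordinates $(x_1,x_2,y)$, $z=x_1+ix_2$, $R=\sqrt{|z|^2+y^2}$, $\Delta=\partial_1^2+\partial_2^2+\partial_y^2$. $P(z)$ is a non-zero complex polynomial of degree $N$; $( * )$ is $\Delta u+e^{-2u}|P(z)|^2=0$. $u_0$ is a smooth solution of $( * )$ with $\sup_X ye^{-u_0}|P|<\infty$ and $|u_0-N\ln R-\ln y|\le K$ for $R\ge R_0$. With $C_0\ge\max\{1,\sup_X y^2e^{-2u_0}|P|^2\}$ fixed, $f_{C_0}(y)=0$ for $y\le C_0$, $f_{C_0}(y)=y-C_0\ln(y/C_0)-C_0$ for $y\ge C_0$. Let $\mathcal U$ be the set of continuous weak sub-solutions $v$ of $( * )$ (i.e. $\int_X(-v\Delta\phi-e^{-2v}|P|^2\phi)\le0$ for all non-negative compactly supported smooth $\phi$) with $v\le u_0+y$ on $X$, and $u_3=\sup\mathcal U$ pointwise. It is known that $u_3$ is a smooth solution of $( * )$ with $u_0+f_{C_0}(y)\le u_3\le u_0+y$. *)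

theory Defs
  imports "HOL-Analysis.Analysis" "HOL-Computational_Algebra.Polynomial"
begin

text \<open>Points of R^3 are vectors p :: real^3 with p$1 = x1, p$2 = x2, p$3 = y.\<close>

definition halfspace :: "(real^3) set" where
  "halfspace = {p. p $ 3 > 0}"

definition zc :: "real^3 \<Rightarrow> complex" where
  "zc p = Complex (p $ 1) (p $ 2)"

definition Rad :: "real^3 \<Rightarrow> real" where
  "Rad p = sqrt ((cmod (zc p))^2 + (p $ 3)^2)"

definition dpart :: "real^3 \<Rightarrow> (real^3 \<Rightarrow> real) \<Rightarrow> real^3 \<Rightarrow> real" where
  "dpart i f = (\<lambda>x. frechet_derivative f (at x) i)"

definition smooth_on :: "(real^3) set \<Rightarrow> (real^3 \<Rightarrow> real) \<Rightarrow> bool" where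
  "smooth_on S f \<longleftrightarrow> (\<forall>is. set is \<subseteq> Basis \<longrightarrow>
      (foldr dpart is f) differentiable_on S \<and> continuous_on S (foldr dpart is f))"

definition laplacian :: "(real^3 \<Rightarrow> real) \<Rightarrow> real^3 \<Rightarrow> real" where
  "laplacian f x = (\<Sum>i\<in>Basis. dpart i (dpart i f) x)"

definition grad_sq :: "(real^3 \<Rightarrow> real) \<Rightarrow> real^3 \<Rightarrow> real" where
  "grad_sq f x = (\<Sum>i\<in>Basis. (dpart i f x)^2)"

definition smooth_solution :: "complex poly \<Rightarrow> (real^3 \<Rightarrow> real) \<Rightarrow> bool" where
  "smooth_solution P u \<longleftrightarrow> smooth_on halfspace u \<and>
     (\<forall>x\<in>halfspace. laplacian u x + exp (-2 * u x) * (cmod (poly P (zc x)))^2 = 0)"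

definition test_fun :: "(real^3 \<Rightarrow> real) \<Rightarrow> bool" where
  "test_fun \<phi> \<longleftrightarrow> smooth_on UNIV \<phi> \<and> (\<forall>x. \<phi> x \<ge> 0) \<and>
     compact (closure {x. \<phi> x \<noteq> 0}) \<and> closure {x. \<phi> x \<noteq> 0} \<subseteq> halfspace"

definition weak_subsolution :: "complex poly \<Rightarrow> (real^3 \<Rightarrow> real) \<Rightarrow> bool" where
  "weak_subsolution P v \<longleftrightarrow> continuous_on halfspace v \<and>
     (\<forall>\<phi>. test_fun \<phi> \<longrightarrow>
        integral halfspace (\<lambda>x. - v x * laplacian \<phi> x
            - exp (-2 * v x) * (cmod (poly P (zc x)))^2 * \<phi> x) \<le> 0)"

definition fC :: "real \<Rightarrow> real \<Rightarrow> real" where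
  "fC C0 y = (if y \<le> C0 then 0 else y - C0 * ln (y / C0) - C0)"

definition subsol_class :: "complex poly \<Rightarrow> (real^3 \<Rightarrow> real) \<Rightarrow> (real^3 \<Rightarrow> real) set" where
  "subsol_class P u0 = {v. weak_subsolution P v \<and> (\<forall>x\<in>halfspace. v x \<le> u0 x + x $ 3)}"

definition u3 :: "complex poly \<Rightarrow> (real^3 \<Rightarrow> real) \<Rightarrow> real^3 \<Rightarrow> real" where
  "u3 P u0 x = (SUP v\<in>subsol_class P u0. v x)"

end

theory Submission
  imports Defs
begin

text \<open>
  The bounds \<open>u0 \<le> u3 \<le> u0 + y\<close> give \<open>0 \<le> v \<le> y\<close>, and subtracting the
  two equations gives \<open>\<Delta>v = |P|\<^sup>2 (exp (-2 u0) - exp (-2 u3)) \<ge> 0\<close>: \<open>v\<close> is a bounded nonnegative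
  subharmonic function, and for those a Caccioppoli inequality holds. With the cutoff
  \<open>\<eta> = max 0 (4r\<^sup>2 - |x - p|\<^sup>2)\<^sup>3\<close> the field \<open>\<eta> v \<nabla>v - v\<^sup>2/2 \<nabla>\<eta>\<close> is compactly supported and
  has divergence \<open>\<eta> |\<nabla>v|\<^sup>2 + \<eta> v \<Delta>v - v\<^sup>2/2 \<Delta>\<eta>\<close>, so its integral vanishes. Dropping the
  nonnegative middle term leaves \<open>\<integral> \<eta> |\<nabla>v|\<^sup>2 \<le> \<integral> v\<^sup>2/2 \<Delta>\<eta>\<close>, which is \<open>O(y\<^sup>2 r\<^sup>4)\<close> times the
  volume \<open>O(r\<^sup>3)\<close> of the support, while \<open>\<eta> \<ge> 27 r\<^sup>6\<close> on \<open>B\<^sub>r\<close>.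

  That the integral of a partial derivative \<open>\<partial>\<^sub>i F\<close> of a compactly supported \<open>F\<close> vanishes is
  proved directly: the difference quotients of \<open>F\<close> in direction \<open>e\<^sub>i\<close> integrate to zero by
  translation invariance and converge uniformly to \<open>\<partial>\<^sub>i F\<close> by the mean value theorem.
\<close>

section \<open>Integrals of derivatives of compactly supported functions\<close>

lemma add_mem_cbox_enlarged:
  fixes x c :: "'a::euclidean_space"
  assumes "x \<in> cbox a b" "norm c \<le> m"
  shows "x + c \<in> cbox (a - m *\<^sub>R One) (b + m *\<^sub>R One)"
proof -
  have "\<bar>c \<bullet> i\<bar> \<le> m" if "i \<in> Basis" for i
    using Basis_le_norm[OF that, of c] assms(2) by linarith
  then show ?thesis
    using assms(1) by (force simp: mem_box inner_add_left inner_diff_left)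
qed

lemma cball_subset_cbox_One:
  fixes p :: "'a::euclidean_space"
  shows "cball p \<rho> \<subseteq> cbox (p - \<rho> *\<^sub>R One) (p + \<rho> *\<^sub>R One)"
proof
  fix x assume "x \<in> cball p \<rho>"
  then have "\<bar>(x - p) \<bullet> i\<bar> \<le> \<rho>" if "i \<in> Basis" for i
    using Basis_le_norm[OF that, of "x - p"] by (simp add: dist_norm norm_minus_commute)
  then show "x \<in> cbox (p - \<rho> *\<^sub>R One) (p + \<rho> *\<^sub>R One)"
    by (force simp: mem_box inner_diff_left inner_add_left abs_le_iff)
qed

lemma integrable_on_subset_cbox:
  fixes f :: "'a::euclidean_space \<Rightarrow> real"
  assumes "continuous_on (cbox a b) f" "T \<in> sets lebesgue" "T \<subseteq> cbox a b"
  shows "f integrable_on T"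
  using set_integrable_subset[OF absolutely_integrable_continuous[OF assms(1)] assms(2,3)]
  by (simp add: absolutely_integrable_on_def)

lemma difference_quotient_near_derivative:
  fixes F G :: "'a::real_vector \<Rightarrow> real"
  assumes h: "0 < h"
    and deriv: "\<And>t. 0 \<le> t \<Longrightarrow> t \<le> h \<Longrightarrow>
                  ((\<lambda>s. F (x + s *\<^sub>R e)) has_real_derivative G (x + t *\<^sub>R e)) (at t)"
    and close: "\<And>t. 0 \<le> t \<Longrightarrow> t \<le> h \<Longrightarrow> \<bar>G (x + t *\<^sub>R e) - G x\<bar> \<le> \<epsilon>"
  shows "\<bar>G x - (F (x + h *\<^sub>R e) - F x) / h\<bar> \<le> \<epsilon>"
proof -
  obtain t where "0 < t" "t < h" "F (x + h *\<^sub>R e) - F (x + 0 *\<^sub>R e) = (h - 0) * G (x + t *\<^sub>R e)"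
    using MVT2[OF h, of "\<lambda>s. F (x + s *\<^sub>R e)" "\<lambda>t. G (x + t *\<^sub>R e)"] deriv by blast
  then show ?thesis
    using close[of t] h by (simp add: abs_minus_commute)
qed

lemma real_eq_0_if_abs_le_eps_mult:
  fixes x c :: real
  assumes "\<And>\<epsilon>. 0 < \<epsilon> \<Longrightarrow> \<bar>x\<bar> \<le> \<epsilon> * c"
  shows "x = 0"
proof -
  have "\<bar>x\<bar> \<le> 0"
  proof (rule field_le_epsilon)
    fix d :: real assume "0 < d"
    have pos: "0 < \<bar>c\<bar> + 1" by simp
    with \<open>0 < d\<close> have "\<bar>x\<bar> \<le> d / (\<bar>c\<bar> + 1) * c"
      by (intro assms) simp
    also have "\<dots> \<le> d / (\<bar>c\<bar> + 1) * (\<bar>c\<bar> + 1)"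
      using \<open>0 < d\<close> pos by (intro mult_left_mono) auto
    also have "\<dots> = d"
      using pos by simp
    finally show "\<bar>x\<bar> \<le> 0 + d" by simp
  qed
  then show ?thesis by simp
qed

lemma has_integral_difference_quotient_0:
  fixes F :: "'a::euclidean_space \<Rightarrow> real"
  assumes F_int: "(F has_integral I) (cbox a b)"
    and supp: "\<And>x. x \<notin> cbox a b \<Longrightarrow> F x = 0"
    and "cbox a b \<subseteq> T" "cbox (a - c) (b - c) \<subseteq> T"
  shows "((\<lambda>x. (F (x + c) - F x) / h) has_integral 0) T"
proof -
  have "((\<lambda>x. F (x + c)) has_integral I) T"
  proof (rule has_integral_on_superset)
    show "((\<lambda>x. F (x + c)) has_integral I) (cbox (a - c) (b - c))"
      using has_integral_affinity'[OF F_int, of 1 c] by simp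
    have "x + c \<in> cbox a b \<longleftrightarrow> x \<in> cbox (a - c) (b - c)" for x
      by (auto simp: mem_box algebra_simps)
    then show "F (x + c) = 0" if "x \<notin> cbox (a - c) (b - c)" for x
      using supp that by blast
  qed fact
  moreover have "(F has_integral I) T"
    using has_integral_on_superset[OF F_int] supp assms(3) by blast
  ultimately show ?thesis
    using has_integral_divide[OF has_integral_diff, of _ I T F I h] by simp
qed

lemma integral_directional_derivative_eq_0:
  fixes F G :: "'a::euclidean_space \<Rightarrow> real"
  assumes m: "0 < m" and e: "norm e \<le> 1"
    and F_int: "F integrable_on cbox a b"
    and G_cont: "continuous_on (cbox (a - m *\<^sub>R One) (b + m *\<^sub>R One)) G"
    and supp: "\<And>x. x \<notin> cbox a b \<Longrightarrow> F x = 0 \<and> G x = 0"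
    and deriv: "\<And>y. y \<in> cbox (a - m *\<^sub>R One) (b + m *\<^sub>R One) \<Longrightarrow>
                  ((\<lambda>s. F (y + s *\<^sub>R e)) has_real_derivative G y) (at 0)"
  shows "integral (cbox a b) G = 0"
proof -
  define W where "W = cbox (a - m *\<^sub>R One) (b + m *\<^sub>R One)"
  define L where "L = cbox (a - (m/2) *\<^sub>R One) (b + (m/2) *\<^sub>R One)"
  have near_L: "x + c \<in> L" if "x \<in> cbox a b" "norm c \<le> m/2" for x c
    using add_mem_cbox_enlarged[OF that] by (simp add: L_def)
  have line_W: "x + t *\<^sub>R e \<in> W" if "x \<in> L" "\<bar>t\<bar> \<le> m/2" for x t
  proof -
    have "norm (t *\<^sub>R e) \<le> m/2"
      using mult_mono[OF that(2) e] m by simp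
    from add_mem_cbox_enlarged[OF that(1)[unfolded L_def] this] show ?thesis
      by (simp add: W_def algebra_simps flip: scaleR_add_left)
  qed
  have L_W: "L \<subseteq> W" using line_W[of _ 0] m by auto
  have ab_L: "cbox a b \<subseteq> L" using near_L[of _ 0] m by auto
  have G_int: "G integrable_on L"
    using continuous_on_subset[OF G_cont L_W[unfolded W_def]] unfolding L_def by (rule integrable_continuous)
  have norm_te: "norm (t *\<^sub>R e) \<le> t" if "0 \<le> t" for t
    using mult_left_le[OF e that] that by simp
  have "\<bar>integral L G\<bar> \<le> \<epsilon> * measure lborel L" if "\<epsilon> > 0" for \<epsilon>
  proof -
    obtain \<delta> where \<delta>: "\<delta> > 0"
      and uc: "\<And>x x'. x \<in> W \<Longrightarrow> x' \<in> W \<Longrightarrow> dist x' x < \<delta> \<Longrightarrow> dist (G x') (G x) < \<epsilon>"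
      using compact_uniformly_continuous[OF G_cont compact_cbox] \<open>\<epsilon> > 0\<close>
      unfolding uniformly_continuous_on_def W_def by metis
    define h where "h = min (\<delta>/2) (m/2)"
    have h: "0 < h" "h \<le> m/2" "h < \<delta>" using \<delta> m by (auto simp: h_def)
    define DQ where "DQ x = (F (x + h *\<^sub>R e) - F x) / h" for x
    have shift_L: "cbox (a - h *\<^sub>R e) (b - h *\<^sub>R e) \<subseteq> L"
    proof
      fix x assume "x \<in> cbox (a - h *\<^sub>R e) (b - h *\<^sub>R e)"
      then have "x + h *\<^sub>R e \<in> cbox a b"
        by (auto simp: mem_box algebra_simps)
      moreover have "norm (- (h *\<^sub>R e)) \<le> m/2"
        using norm_te[of h] h by (simp only: norm_minus_cancel) linarith
      ultimately show "x \<in> L" using near_L by fastforce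
    qed
    have DQ: "(DQ has_integral 0) L"
      unfolding DQ_def using supp
      by (intro has_integral_difference_quotient_0[OF integrable_integral[OF F_int] _ ab_L shift_L]) auto
    have close: "\<bar>G x - DQ x\<bar> \<le> \<epsilon>" if x: "x \<in> L" for x
      unfolding DQ_def
    proof (rule difference_quotient_near_derivative[OF h(1)])
      fix t assume t: "0 \<le> t" "t \<le> h"
      then have xt: "x + t *\<^sub>R e \<in> W" using line_W[OF x, of t] h by simp
      have "((\<lambda>s. F ((x + t *\<^sub>R e) + s *\<^sub>R e)) has_real_derivative G (x + t *\<^sub>R e)) (at 0)"
        using deriv xt by (simp add: W_def)
      then show "((\<lambda>s. F (x + s *\<^sub>R e)) has_real_derivative G (x + t *\<^sub>R e)) (at t)"
        using DERIV_shift[of "\<lambda>s. F (x + s *\<^sub>R e)" _ 0 t] by (simp add: algebra_simps scaleR_add_left)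
      have "dist (x + t *\<^sub>R e) x < \<delta>" using norm_te[OF t(1)] t h by (simp add: dist_norm)
      then show "\<bar>G (x + t *\<^sub>R e) - G x\<bar> \<le> \<epsilon>"
        using uc[OF _ xt] L_W x by (fastforce simp: dist_real_def)
    qed
    have "((\<lambda>x. G x - DQ x) has_integral integral L G - 0) L"
      using has_integral_diff[OF integrable_integral[OF G_int] DQ] .
    from has_integral_bound[OF _ this[unfolded L_def]] close \<open>\<epsilon> > 0\<close> show ?thesis
      by (simp add: L_def)
  qed
  then have "integral L G = 0"
    by (rule real_eq_0_if_abs_le_eps_mult)
  moreover have "integral L G = integral L (\<lambda>x. if x \<in> cbox a b then G x else 0)"
    by (rule integral_cong) (use supp in auto)
  moreover have "\<dots> = integral (cbox a b) G"
    using integral_restrict_Int[of L "cbox a b" G] ab_L by (simp add: Int_absorb2)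
  ultimately show ?thesis by simp
qed

lemma integral_partial_derivative_cube_eq_0:
  fixes p i :: "'a::euclidean_space" and r :: real and F G :: "'a \<Rightarrow> real"
  defines "W \<equiv> cbox (p - (5/2 * r) *\<^sub>R One) (p + (5/2 * r) *\<^sub>R One)"
  assumes r: "0 < r" and i: "i \<in> Basis"
    and F_cont: "continuous_on W F" and G_cont: "continuous_on W G"
    and supp: "\<And>x. x \<notin> cball p (2*r) \<Longrightarrow> F x = 0 \<and> G x = 0"
    and deriv: "\<And>y. y \<in> W \<Longrightarrow> ((\<lambda>s. F (y + s *\<^sub>R i)) has_real_derivative G y) (at 0)"
  shows "integral (cbox (p - (2*r) *\<^sub>R One) (p + (2*r) *\<^sub>R One)) G = 0"
proof -
  have W_eq: "cbox ((p - (2*r) *\<^sub>R One) - (r/2) *\<^sub>R One) ((p + (2*r) *\<^sub>R One) + (r/2) *\<^sub>R One) = W"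
  proof -
    have "2*r + r/2 = 5/2 * r" by simp
    then show ?thesis
      unfolding W_def diff_diff_eq add.assoc scaleR_add_left[symmetric] by simp
  qed
  have "cbox (p - (2*r) *\<^sub>R One) (p + (2*r) *\<^sub>R One) \<subseteq> W"
    unfolding W_def subset_box(1) using r by (simp add: inner_diff_left inner_add_left)
  then have "F integrable_on cbox (p - (2*r) *\<^sub>R One) (p + (2*r) *\<^sub>R One)"
    using continuous_on_subset[OF F_cont] by (blast intro: integrable_continuous)
  moreover have "F x = 0 \<and> G x = 0" if "x \<notin> cbox (p - (2*r) *\<^sub>R One) (p + (2*r) *\<^sub>R One)" for x
    using supp that cball_subset_cbox_One[of p "2*r"] by blast
  ultimately show ?thesis
    using r i G_cont deriv unfolding W_eq[symmetric]
    by (intro integral_directional_derivative_eq_0[where m="r/2" and e=i and F=F]) auto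
qed

section \<open>The cutoff function\<close>

lemma has_real_derivative_max0_power:
  assumes n: "2 \<le> n"
  shows "((\<lambda>t::real. (max 0 t)^n) has_real_derivative real n * (max 0 t)^(n-1)) (at t)"
proof (cases t "0::real" rule: linorder_cases)
  case less
  have "((\<lambda>t::real. 0) has_real_derivative 0) (at t)" by simp
  then have "((\<lambda>t::real. (max 0 t)^n) has_real_derivative 0) (at t)"
    by (rule has_field_derivative_transform_within_open[where S="{..<0}"]) (use less n in auto)
  then show ?thesis using less n by (simp add: power_0_left)
next
  case greater
  have "((\<lambda>t::real. t^n) has_real_derivative real n * t^(n-1)) (at t)"
    using DERIV_pow[of n t] by simp
  then have "((\<lambda>t::real. (max 0 t)^n) has_real_derivative real n * t^(n-1)) (at t)"
    by (rule has_field_derivative_transform_within_open[where S="{0<..}"]) (use greater in auto)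
  then show ?thesis using greater by simp
next
  case equal
  have "((\<lambda>h. (max 0 h)^n / h) \<longlongrightarrow> 0) (at (0::real))"
  proof (rule Lim_null_comparison)
    have "\<bar>(max 0 h)^n / h\<bar> \<le> \<bar>h\<bar>" if "\<bar>h\<bar> < 1" for h :: real
    proof -
      have "\<bar>max 0 h\<bar>^n \<le> \<bar>h\<bar>^n" by (rule power_mono) auto
      also have "\<dots> \<le> \<bar>h\<bar>^2" using power_decreasing[OF n, of "\<bar>h\<bar>"] that by simp
      finally show ?thesis by (simp add: abs_divide divide_le_eq power_abs power2_eq_square)
    qed
    moreover have "\<forall>\<^sub>F h in at (0::real). \<bar>h\<bar> < 1"
      unfolding eventually_at by (rule exI[of _ 1]) (auto simp: dist_norm)
    ultimately show "\<forall>\<^sub>F h in at 0. norm ((max 0 h)^n / h) \<le> \<bar>h\<bar>"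
      by (auto elim: eventually_mono)
    show "((\<lambda>h::real. \<bar>h\<bar>) \<longlongrightarrow> 0) (at 0)"
      using tendsto_rabs[OF tendsto_ident_at, of "0::real" UNIV] by simp
  qed
  then show ?thesis using equal n by (simp add: DERIV_def power_0_left)
qed

lemma has_real_derivative_along_line:
  fixes f :: "'a::real_normed_vector \<Rightarrow> real"
  assumes "f differentiable (at y)"
  shows "((\<lambda>s. f (y + s *\<^sub>R e)) has_real_derivative frechet_derivative f (at y) e) (at 0)"
proof -
  have D: "(f has_derivative frechet_derivative f (at y)) (at (y + 0 *\<^sub>R e))"
    using frechet_derivative_works[THEN iffD1, OF assms] by simp
  have "((\<lambda>s::real. y + s *\<^sub>R e) has_derivative (\<lambda>s. s *\<^sub>R e)) (at 0)"
    by (auto intro!: derivative_eq_intros)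
  from has_derivative_compose[OF this D]
  have "((\<lambda>s. f (y + s *\<^sub>R e)) has_derivative (\<lambda>s. s * frechet_derivative f (at y) e)) (at 0)"
    using linear_scale[OF has_derivative_linear[OF D]] by simp
  then show ?thesis
    by (simp add: has_field_derivative_def mult_commute_abs)
qed

lemma has_real_derivative_energy_flux:
  fixes \<eta> \<eta>' v v' :: "real \<Rightarrow> real"
  assumes "(\<eta> has_real_derivative \<eta>' t) (at t)" "(\<eta>' has_real_derivative \<eta>'') (at t)"
    and "(v has_real_derivative v' t) (at t)" "(v' has_real_derivative v'') (at t)"
  shows "((\<lambda>s. \<eta> s * v s * v' s - v s^2 / 2 * \<eta>' s) has_real_derivative
           \<eta> t * (v' t)^2 + \<eta> t * v t * v'' - v t^2 / 2 * \<eta>'') (at t)"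
  using assms by (auto intro!: derivative_eq_intros simp: algebra_simps power2_eq_square)

definition bump :: "'a::real_normed_vector \<Rightarrow> real \<Rightarrow> 'a \<Rightarrow> real" where
  "bump p \<rho> x = max 0 (\<rho>^2 - norm (x - p)^2)"

lemma bump_nonneg: "0 \<le> bump p \<rho> x"
  by (simp add: bump_def)

lemma bump_eq_0: "x \<notin> cball p \<rho> \<Longrightarrow> 0 \<le> \<rho> \<Longrightarrow> bump p \<rho> x = 0"
  by (simp add: bump_def dist_norm norm_minus_commute power_mono)

lemma bump_le: "bump p \<rho> x \<le> \<rho>^2"
  by (simp add: bump_def)

lemma bump_ge:
  assumes "dist p x \<le> s"
  shows "\<rho>^2 - s^2 \<le> bump p \<rho> x"
proof -
  have "norm (x - p)^2 \<le> s^2"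
    using assms by (intro power_mono) (simp_all add: dist_norm norm_minus_commute)
  then show ?thesis by (simp add: bump_def)
qed

lemma bump_along_basis:
  fixes p y i :: "'a::euclidean_space"
  assumes "i \<in> Basis"
  shows "bump p \<rho> (y + s *\<^sub>R i) = max 0 (\<rho>^2 - (norm (y - p)^2 + 2 * s * ((y - p) \<bullet> i) + s^2))"
proof -
  have "norm (y + s *\<^sub>R i - p)^2 = norm ((y - p) + s *\<^sub>R i)^2"
    by (rule arg_cong[where f="\<lambda>x. norm x ^ 2"]) (simp add: algebra_simps)
  also have "\<dots> = norm (y - p)^2 + 2 * s * ((y - p) \<bullet> i) + s^2"
    using assms unfolding power2_norm_eq_inner
    by (simp add: inner_add_left inner_add_right inner_commute algebra_simps power2_eq_square)
  finally show ?thesis by (simp add: bump_def)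
qed

lemma bump_cube_line_derivative:
  fixes p y i :: "'a::euclidean_space"
  assumes "i \<in> Basis"
  shows "((\<lambda>s. bump p \<rho> (y + s *\<^sub>R i)^3) has_real_derivative
           -6 * bump p \<rho> y^2 * ((y - p) \<bullet> i)) (at 0)"
proof -
  have "((\<lambda>s. \<rho>^2 - (norm (y - p)^2 + 2 * s * ((y - p) \<bullet> i) + s^2)) has_real_derivative
          -2 * ((y - p) \<bullet> i)) (at 0)"
    by (auto intro!: derivative_eq_intros)
  from DERIV_chain2[OF has_real_derivative_max0_power this, of 3]
  show ?thesis
    unfolding bump_along_basis[OF assms] by (simp add: bump_def mult.assoc)
qed

lemma bump_square_line_derivative:
  fixes p y i :: "'a::euclidean_space"
  assumes "i \<in> Basis"
  shows "((\<lambda>s. bump p \<rho> (y + s *\<^sub>R i)^2 * ((y + s *\<^sub>R i - p) \<bullet> i)) has_real_derivative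
           bump p \<rho> y^2 - 4 * bump p \<rho> y * ((y - p) \<bullet> i)^2) (at 0)"
proof -
  have "((\<lambda>s. \<rho>^2 - (norm (y - p)^2 + 2 * s * ((y - p) \<bullet> i) + s^2)) has_real_derivative
          -2 * ((y - p) \<bullet> i)) (at 0)"
    by (auto intro!: derivative_eq_intros)
  from DERIV_chain2[OF has_real_derivative_max0_power this, of 2]
  have sq: "((\<lambda>s. bump p \<rho> (y + s *\<^sub>R i)^2) has_real_derivative
              -4 * bump p \<rho> y * ((y - p) \<bullet> i)) (at 0)"
    unfolding bump_along_basis[OF assms] by (simp add: bump_def mult.assoc)
  have "((\<lambda>s. (y - p) \<bullet> i + s) has_real_derivative 1) (at 0)"
    by (auto intro!: derivative_eq_intros)
  from DERIV_mult[OF sq this] assms show ?thesis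
    by (simp add: inner_add_left inner_diff_left algebra_simps power2_eq_square)
qed

lemma bump_cube_flux_line_derivative:
  fixes p y i :: "'a::euclidean_space" and v a :: "'a \<Rightarrow> real"
  assumes i: "i \<in> Basis"
    and dv: "((\<lambda>s. v (y + s *\<^sub>R i)) has_real_derivative a y) (at 0)"
    and da: "((\<lambda>s. a (y + s *\<^sub>R i)) has_real_derivative b) (at 0)"
  shows "((\<lambda>s. bump p \<rho> (y + s *\<^sub>R i)^3 * v (y + s *\<^sub>R i) * a (y + s *\<^sub>R i)
              - v (y + s *\<^sub>R i)^2 / 2 * (-6 * (bump p \<rho> (y + s *\<^sub>R i)^2 * ((y + s *\<^sub>R i - p) \<bullet> i))))
          has_real_derivative
            bump p \<rho> y^3 * (a y)^2 + bump p \<rho> y^3 * v y * b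
              - v y^2 / 2 * (-6 * (bump p \<rho> y^2 - 4 * bump p \<rho> y * ((y - p) \<bullet> i)^2))) (at 0)"
proof -
  have d\<eta>: "((\<lambda>s. bump p \<rho> (y + s *\<^sub>R i)^3) has_real_derivative
      -6 * (bump p \<rho> (y + 0 *\<^sub>R i)^2 * ((y + 0 *\<^sub>R i - p) \<bullet> i))) (at 0)"
    using bump_cube_line_derivative[OF i] by (simp add: mult.assoc)
  have d\<eta>': "((\<lambda>s. -6 * (bump p \<rho> (y + s *\<^sub>R i)^2 * ((y + s *\<^sub>R i - p) \<bullet> i))) has_real_derivative
      -6 * (bump p \<rho> y^2 - 4 * bump p \<rho> y * ((y - p) \<bullet> i)^2)) (at 0)"
    by (rule DERIV_cmult[OF bump_square_line_derivative[OF i]])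
  have at_0: "y + 0 *\<^sub>R i = y" by simp
  from has_real_derivative_energy_flux[OF d\<eta> d\<eta>', of "\<lambda>s. v (y + s *\<^sub>R i)" "\<lambda>s. a (y + s *\<^sub>R i)",
      unfolded at_0, OF dv da]
  show ?thesis .
qed

lemma bump_cube_laplacian:
  fixes p x :: "'a::euclidean_space"
  shows "(\<Sum>i\<in>Basis. -6 * (bump p \<rho> x^2 - 4 * bump p \<rho> x * ((x - p) \<bullet> i)^2))
       = (24 * norm (x - p)^2 - 6 * real DIM('a) * bump p \<rho> x) * bump p \<rho> x"
proof -
  have N: "(\<Sum>i\<in>Basis. ((x - p) \<bullet> i)^2) = norm (x - p)^2"
    unfolding power2_norm_eq_inner by (subst euclidean_inner) (simp add: power2_eq_square)
  have "(\<Sum>i\<in>Basis. -6 * (bump p \<rho> x^2 - 4 * bump p \<rho> x * ((x - p) \<bullet> i)^2))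
      = (\<Sum>i\<in>Basis. 24 * bump p \<rho> x * ((x - p) \<bullet> i)^2 - 6 * bump p \<rho> x^2)"
    by (rule sum.cong) (simp_all add: algebra_simps)
  also have "\<dots> = 24 * bump p \<rho> x * norm (x - p)^2 - real DIM('a) * (6 * bump p \<rho> x^2)"
    by (simp only: sum_subtractf sum_distrib_left[symmetric] sum_constant N)
  finally show ?thesis
    by (simp add: algebra_simps power2_eq_square)
qed

lemma bump_cube_laplacian_le:
  fixes p x :: "'a::euclidean_space"
  shows "(24 * norm (x - p)^2 - 6 * real DIM('a) * bump p \<rho> x) * bump p \<rho> x \<le> 24 * \<rho>^4"
proof (cases "bump p \<rho> x = 0")
  case False
  then have N: "norm (x - p)^2 \<le> \<rho>^2" by (simp add: bump_def)
  have B: "0 \<le> bump p \<rho> x" "bump p \<rho> x \<le> \<rho>^2" by (rule bump_nonneg, rule bump_le)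
  then have "(24 * norm (x - p)^2 - 6 * real DIM('a) * bump p \<rho> x) * bump p \<rho> x
      \<le> 24 * (norm (x - p)^2 * bump p \<rho> x)"
    by (simp add: algebra_simps)
  also have "\<dots> \<le> 24 * (\<rho>^2 * \<rho>^2)"
    using mult_mono[OF N B(2)] B(1) by simp
  finally show ?thesis by (simp add: power4_eq_xxxx power2_eq_square)
qed simp

section \<open>A Caccioppoli inequality for subharmonic functions\<close>

lemma bump_cube_energy_identity:
  fixes p :: "'a::euclidean_space" and r :: real
    and v :: "'a \<Rightarrow> real" and a b :: "'a \<Rightarrow> 'a \<Rightarrow> real"
  defines "W \<equiv> cbox (p - (5/2 * r) *\<^sub>R One) (p + (5/2 * r) *\<^sub>R One)"
    and "S \<equiv> cbox (p - (2 * r) *\<^sub>R One) (p + (2 * r) *\<^sub>R One)"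
    and "\<eta> \<equiv> \<lambda>x. bump p (2 * r) x ^ 3"
  assumes r: "0 < r"
    and v_cont: "continuous_on W v"
    and a_cont: "\<And>i. i \<in> Basis \<Longrightarrow> continuous_on W (a i)"
    and b_cont: "\<And>i. i \<in> Basis \<Longrightarrow> continuous_on W (b i)"
    and dv: "\<And>i y. i \<in> Basis \<Longrightarrow> y \<in> W \<Longrightarrow> ((\<lambda>s. v (y + s *\<^sub>R i)) has_real_derivative a i y) (at 0)"
    and da: "\<And>i y. i \<in> Basis \<Longrightarrow> y \<in> W \<Longrightarrow> ((\<lambda>s. a i (y + s *\<^sub>R i)) has_real_derivative b i y) (at 0)"
  shows "integral S (\<lambda>x. \<eta> x * (\<Sum>i\<in>Basis. (a i x)^2))
         + integral S (\<lambda>x. \<eta> x * v x * (\<Sum>i\<in>Basis. b i x))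
       = integral S (\<lambda>x. v x^2 / 2 * ((24 * norm (x - p)^2 - 6 * real DIM('a) * bump p (2*r) x) * bump p (2*r) x))"
proof -
  define \<eta>1 where "\<eta>1 i x = -6 * (bump p (2*r) x^2 * ((x - p) \<bullet> i))" for i x
  define \<eta>2 where "\<eta>2 i x = -6 * (bump p (2*r) x^2 - 4 * bump p (2*r) x * ((x - p) \<bullet> i)^2)" for i x
  \<comment> \<open>\<open>F i\<close> is the \<open>i\<close>-th component of the field \<open>\<eta> v \<nabla>v - v\<^sup>2/2 \<nabla>\<eta>\<close>, and \<open>G i\<close> its \<open>i\<close>-th partial derivative\<close>
  define F where "F i x = \<eta> x * v x * a i x - v x^2 / 2 * \<eta>1 i x" for i x
  define G where "G i x = \<eta> x * (a i x)^2 + \<eta> x * v x * b i x - v x^2 / 2 * \<eta>2 i x" for i x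
  define T1 where "T1 x = \<eta> x * (\<Sum>i\<in>Basis. (a i x)^2)" for x
  define T2 where "T2 x = \<eta> x * v x * (\<Sum>i\<in>Basis. b i x)" for x
  define T3 where "T3 x = v x^2 / 2 * ((24 * norm (x - p)^2 - 6 * real DIM('a) * bump p (2*r) x) * bump p (2*r) x)" for x
  have bump_cont: "continuous_on X (bump p (2*r))" for X
    unfolding bump_def by (intro continuous_intros)
  have G_cont: "continuous_on W (G i)" if "i \<in> Basis" for i
    unfolding G_def \<eta>_def \<eta>2_def
    using v_cont a_cont[OF that] b_cont[OF that] bump_cont by (auto intro!: continuous_intros)
  have G_int_0: "integral S (G i) = 0" if i: "i \<in> Basis" for i
    unfolding S_def
  proof (rule integral_partial_derivative_cube_eq_0[OF r i, where p=p and F="F i", folded W_def])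
    show "continuous_on W (F i)"
      unfolding F_def \<eta>_def \<eta>1_def
      using v_cont a_cont[OF i] bump_cont by (auto intro!: continuous_intros)
    show "F i x = 0 \<and> G i x = 0" if "x \<notin> cball p (2*r)" for x
      using bump_eq_0[OF that] r by (simp add: F_def G_def \<eta>_def \<eta>1_def \<eta>2_def)
    show "((\<lambda>s. F i (y + s *\<^sub>R i)) has_real_derivative G i y) (at 0)" if "y \<in> W" for y
      using bump_cube_flux_line_derivative[OF i dv[OF i that] da[OF i that]]
      by (simp only: F_def G_def \<eta>_def \<eta>1_def \<eta>2_def)
  qed (rule G_cont[OF i])
  have S_W: "S \<subseteq> W"
    unfolding S_def W_def subset_box(1) using r by (simp add: inner_diff_left inner_add_left)
  have int_S: "f integrable_on S" if "continuous_on W f" for f :: "'a \<Rightarrow> real"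
    using continuous_on_subset[OF that S_W] unfolding S_def by (rule integrable_continuous)
  have "continuous_on W T1" "continuous_on W T2" "continuous_on W T3"
    unfolding T1_def T2_def T3_def \<eta>_def
    using v_cont a_cont b_cont bump_cont by (auto intro!: continuous_intros)
  then have T_int: "T1 integrable_on S" "T2 integrable_on S" "T3 integrable_on S"
    by (auto intro: int_S)
  have "0 = (\<Sum>i\<in>Basis. integral S (G i))" using G_int_0 by simp
  also have "\<dots> = integral S (\<lambda>x. \<Sum>i\<in>Basis. G i x)"
    using int_S[OF G_cont] by (simp add: integral_sum)
  also have "\<dots> = integral S (\<lambda>x. T1 x + T2 x - T3 x)"
  proof (rule integral_cong)
    fix x
    have "(\<Sum>i\<in>Basis. G i x) = (\<Sum>i\<in>Basis. \<eta> x * (a i x)^2) + (\<Sum>i\<in>Basis. \<eta> x * v x * b i x)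
        - (\<Sum>i\<in>Basis. v x^2 / 2 * \<eta>2 i x)"
      by (simp add: G_def sum.distrib sum_subtractf)
    also have "\<dots> = T1 x + T2 x - T3 x"
      using bump_cube_laplacian[of p "2*r" x]
      by (simp only: T1_def T2_def T3_def sum_distrib_left[symmetric] \<eta>2_def[abs_def])
    finally show "(\<Sum>i\<in>Basis. G i x) = T1 x + T2 x - T3 x" .
  qed
  also have "\<dots> = integral S T1 + integral S T2 - integral S T3"
    using T_int by (simp add: integral_add integral_diff integrable_add)
  finally have "integral S T1 + integral S T2 = integral S T3" by simp
  then show ?thesis
    by (simp only: T1_def[abs_def] T2_def[abs_def] T3_def[abs_def])
qed

lemma caccioppoli_energy_bound:
  fixes p :: "'a::euclidean_space" and r K :: real
    and v :: "'a \<Rightarrow> real" and a b :: "'a \<Rightarrow> 'a \<Rightarrow> real"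
  defines "W \<equiv> cbox (p - (5/2 * r) *\<^sub>R One) (p + (5/2 * r) *\<^sub>R One)"
    and "S \<equiv> cbox (p - (2 * r) *\<^sub>R One) (p + (2 * r) *\<^sub>R One)"
  assumes r: "0 < r"
    and v_cont: "continuous_on W v"
    and a_cont: "\<And>i. i \<in> Basis \<Longrightarrow> continuous_on W (a i)"
    and b_cont: "\<And>i. i \<in> Basis \<Longrightarrow> continuous_on W (b i)"
    and dv: "\<And>i y. i \<in> Basis \<Longrightarrow> y \<in> W \<Longrightarrow> ((\<lambda>s. v (y + s *\<^sub>R i)) has_real_derivative a i y) (at 0)"
    and da: "\<And>i y. i \<in> Basis \<Longrightarrow> y \<in> W \<Longrightarrow> ((\<lambda>s. a i (y + s *\<^sub>R i)) has_real_derivative b i y) (at 0)"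
    and v_nonneg: "\<And>x. x \<in> cball p (2*r) \<Longrightarrow> 0 \<le> v x"
    and v_le: "\<And>x. x \<in> cball p (2*r) \<Longrightarrow> v x \<le> K"
    and subharmonic: "\<And>x. x \<in> cball p (2*r) \<Longrightarrow> 0 \<le> (\<Sum>i\<in>Basis. b i x)"
  shows "integral S (\<lambda>x. bump p (2*r) x ^ 3 * (\<Sum>i\<in>Basis. (a i x)^2)) \<le> 192 * K^2 * r^4 * (4*r)^DIM('a)"
proof -
  define B where "B = bump p (2*r)"
  define T2 where "T2 x = B x ^ 3 * v x * (\<Sum>i\<in>Basis. b i x)" for x
  define T3 where "T3 x = v x^2 / 2 * ((24 * norm (x - p)^2 - 6 * real DIM('a) * B x) * B x)" for x
  have identity: "integral S (\<lambda>x. B x ^ 3 * (\<Sum>i\<in>Basis. (a i x)^2)) + integral S T2 = integral S T3"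
    using bump_cube_energy_identity[OF r v_cont[unfolded W_def] a_cont[unfolded W_def]
        b_cont[unfolded W_def] dv[unfolded W_def] da[unfolded W_def]]
    by (simp only: S_def B_def T2_def[abs_def] T3_def[abs_def])
  have S_W: "S \<subseteq> W"
    unfolding S_def W_def subset_box(1) using r by (simp add: inner_diff_left inner_add_left)
  have "continuous_on S T2" "continuous_on S T3"
    unfolding T2_def T3_def B_def bump_def
    using continuous_on_subset[OF v_cont S_W] continuous_on_subset[OF b_cont S_W]
    by (auto intro!: continuous_intros)
  then have T_int: "T2 integrable_on S" "T3 integrable_on S"
    unfolding S_def by (auto intro: integrable_continuous)
  have B_outside: "B x = 0" if "x \<notin> cball p (2*r)" for x
    using bump_eq_0[OF that] r by (simp add: B_def)
  have T2_nonneg: "0 \<le> T2 x" for x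
  proof (cases "x \<in> cball p (2*r)")
    case True
    then show ?thesis
      by (simp add: T2_def v_nonneg subharmonic B_def bump_nonneg)
  qed (simp add: T2_def B_outside)
  have T3_le: "T3 x \<le> 192 * K^2 * r^4" for x
  proof (cases "x \<in> cball p (2*r)")
    case True
    have "T3 x \<le> v x^2 / 2 * (384 * r^4)"
      using bump_cube_laplacian_le[of x p "2*r"]
      unfolding T3_def B_def by (intro mult_left_mono) (simp_all add: power_mult_distrib)
    also have "\<dots> \<le> K^2 / 2 * (384 * r^4)"
      using v_nonneg[OF True] v_le[OF True] by (intro mult_right_mono) (simp_all add: power_mono)
    finally show ?thesis by simp
  qed (simp add: T3_def B_outside)
  have "integral S (\<lambda>x. B x ^ 3 * (\<Sum>i\<in>Basis. (a i x)^2)) \<le> integral S T3"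
    using identity integral_nonneg[OF T_int(1)] T2_nonneg by simp
  also have "\<dots> \<le> integral S (\<lambda>_. 192 * K^2 * r^4)"
    by (rule integral_le[OF T_int(2)]) (auto simp: T3_le S_def)
  also have "\<dots> = 192 * K^2 * r^4 * (4*r)^DIM('a)"
    unfolding S_def using r by (simp add: content_cbox' inner_diff_left inner_add_left)
  finally show ?thesis by (simp add: B_def)
qed

lemma caccioppoli_inequality:
  fixes p :: "'a::euclidean_space" and r K :: real
    and v :: "'a \<Rightarrow> real" and a b :: "'a \<Rightarrow> 'a \<Rightarrow> real"
  defines "W \<equiv> cbox (p - (5/2 * r) *\<^sub>R One) (p + (5/2 * r) *\<^sub>R One)"
  assumes r: "0 < r"
    and v_cont: "continuous_on W v"
    and a_cont: "\<And>i. i \<in> Basis \<Longrightarrow> continuous_on W (a i)"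
    and b_cont: "\<And>i. i \<in> Basis \<Longrightarrow> continuous_on W (b i)"
    and dv: "\<And>i y. i \<in> Basis \<Longrightarrow> y \<in> W \<Longrightarrow> ((\<lambda>s. v (y + s *\<^sub>R i)) has_real_derivative a i y) (at 0)"
    and da: "\<And>i y. i \<in> Basis \<Longrightarrow> y \<in> W \<Longrightarrow> ((\<lambda>s. a i (y + s *\<^sub>R i)) has_real_derivative b i y) (at 0)"
    and v_nonneg: "\<And>x. x \<in> cball p (2*r) \<Longrightarrow> 0 \<le> v x"
    and v_le: "\<And>x. x \<in> cball p (2*r) \<Longrightarrow> v x \<le> K"
    and subharmonic: "\<And>x. x \<in> cball p (2*r) \<Longrightarrow> 0 \<le> (\<Sum>i\<in>Basis. b i x)"
  shows "integral (ball p r) (\<lambda>x. \<Sum>i\<in>Basis. (a i x)^2) \<le> 64/9 * K^2 * (4*r)^DIM('a) / r^2"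
proof -
  define S where "S = cbox (p - (2 * r) *\<^sub>R One) (p + (2 * r) *\<^sub>R One)"
  define T where "T x = bump p (2*r) x ^ 3 * (\<Sum>i\<in>Basis. (a i x)^2) / (27 * r^6)" for x
  have S_W: "S \<subseteq> W"
    unfolding S_def W_def subset_box(1) using r by (simp add: inner_diff_left inner_add_left)
  have ball_S: "ball p r \<subseteq> S"
    using cball_subset_cbox_One[of p "2*r"] r by (auto simp: S_def)
  have T_cont: "continuous_on S T"
    unfolding T_def bump_def using continuous_on_subset[OF a_cont S_W] r
    by (auto intro!: continuous_intros)
  have int_ball: "f integrable_on ball p r" if "continuous_on S f" for f :: "'a \<Rightarrow> real"
    using integrable_on_subset_cbox[of _ _ f] that ball_S unfolding S_def by auto
  have T_nonneg: "0 \<le> T x" for x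
    using r by (simp add: T_def bump_nonneg sum_nonneg)
  have le_T: "(\<Sum>i\<in>Basis. (a i x)^2) \<le> T x" if "x \<in> ball p r" for x
  proof -
    have "3 * r^2 \<le> bump p (2*r) x"
      using bump_ge[of p x r "2*r"] that by (simp add: power_mult_distrib)
    then have "27 * r^6 \<le> bump p (2*r) x ^ 3"
      using power_mono[of "3 * r^2" "bump p (2*r) x" 3] r by (simp add: power_mult_distrib flip: power_mult)
    then have "27 * r^6 * (\<Sum>i\<in>Basis. (a i x)^2) \<le> bump p (2*r) x ^ 3 * (\<Sum>i\<in>Basis. (a i x)^2)"
      by (intro mult_right_mono) (auto intro: sum_nonneg)
    then show ?thesis using r by (simp add: T_def field_simps)
  qed
  have "integral (ball p r) (\<lambda>x. \<Sum>i\<in>Basis. (a i x)^2) \<le> integral (ball p r) T"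
    using le_T continuous_on_subset[OF a_cont S_W]
    by (intro integral_le int_ball T_cont) (auto intro!: continuous_intros)
  also have "\<dots> \<le> integral S T"
    using T_cont unfolding S_def
    by (intro integral_subset_le[OF ball_S[unfolded S_def]] int_ball[unfolded S_def] integrable_continuous)
      (auto simp: T_nonneg)
  also have "\<dots> = integral S (\<lambda>x. bump p (2*r) x ^ 3 * (\<Sum>i\<in>Basis. (a i x)^2)) / (27 * r^6)"
    unfolding T_def by (rule integral_divide)
  also have "\<dots> \<le> 192 * K^2 * r^4 * (4*r)^DIM('a) / (27 * r^6)"
    using caccioppoli_energy_bound[OF r v_cont[unfolded W_def] a_cont[unfolded W_def]
        b_cont[unfolded W_def] dv[unfolded W_def] da[unfolded W_def] v_nonneg v_le subharmonic] r
    unfolding S_def by (intro divide_right_mono) simp_all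
  also have "\<dots> = 64/9 * K^2 * (4*r)^DIM('a) / r^2"
    using r by (simp add: field_simps power2_eq_square power4_eq_xxxx) (simp add: eval_nat_numeral)
  finally show ?thesis .
qed

section \<open>Solutions of the equation on the half-space\<close>

lemma smooth_on_second_order:
  assumes "smooth_on S f" "open S"
  shows "continuous_on S f" "x \<in> S \<Longrightarrow> f differentiable (at x)"
    and "i \<in> Basis \<Longrightarrow> continuous_on S (dpart i f)"
    and "i \<in> Basis \<Longrightarrow> continuous_on S (dpart i (dpart i f))"
    and "i \<in> Basis \<Longrightarrow> x \<in> S \<Longrightarrow> dpart i f differentiable (at x)"
proof -
  have iterated: "foldr dpart is f differentiable_on S \<and> continuous_on S (foldr dpart is f)"
    if "set is \<subseteq> Basis" for "is"
    using assms(1) that unfolding smooth_on_def by blast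
  show "continuous_on S f" "x \<in> S \<Longrightarrow> f differentiable (at x)"
    using iterated[of "[]"] assms(2) differentiable_on_eq_differentiable_at by auto
  assume i: "i \<in> Basis"
  show "continuous_on S (dpart i f)" "x \<in> S \<Longrightarrow> dpart i f differentiable (at x)"
    using iterated[of "[i]"] i assms(2) differentiable_on_eq_differentiable_at by auto
  show "continuous_on S (dpart i (dpart i f))"
    using iterated[of "[i, i]"] i by simp
qed

lemma dpart_diff:
  assumes "f differentiable (at x)" "g differentiable (at x)"
  shows "dpart i (\<lambda>x. f x - g x) x = dpart i f x - dpart i g x"
proof -
  have "((\<lambda>x. f x - g x) has_derivative
           (\<lambda>h. frechet_derivative f (at x) h - frechet_derivative g (at x) h)) (at x)"
    using assms by (intro has_derivative_diff) (simp_all only: frechet_derivative_works)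
  then have "frechet_derivative (\<lambda>x. f x - g x) (at x)
      = (\<lambda>h. frechet_derivative f (at x) h - frechet_derivative g (at x) h)"
    by (rule frechet_derivative_at[symmetric])
  then show ?thesis by (simp add: dpart_def)
qed

lemma fC_nonneg:
  assumes "1 \<le> C0" "0 < y"
  shows "0 \<le> fC C0 y"
proof (cases "y \<le> C0")
  case False
  have "C0 * ln (y / C0) \<le> C0 * (y / C0 - 1)"
    using assms by (intro mult_left_mono ln_le_minus_one) auto
  also have "\<dots> = y - C0" using assms by (simp add: field_simps)
  finally show ?thesis using False by (simp add: fC_def)
qed (simp add: fC_def)

lemma vec_nth_One: "(One :: real^'n) $ k = 1"
  by (simp add: cart_eq_inner_axis inner_sum_left inner_Basis if_distrib sum.delta cong: if_cong)

lemma vec_nth_dist_le_in_cube: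
  fixes x p :: "real^'n"
  assumes "x \<in> cbox (p - s *\<^sub>R One) (p + s *\<^sub>R One)"
  shows "\<bar>x $ k - p $ k\<bar> \<le> s"
  using assms[unfolded mem_box_cart, rule_format, of k] vec_nth_One[where 'n='n and k=k, simplified]
  by auto

lemma open_halfspace: "open halfspace"
  unfolding halfspace_def by (rule open_halfspace_component_gt_cart)

lemma laplacian_diff_of_solutions_nonneg:
  assumes "smooth_solution P U" "smooth_solution P u0" "x \<in> halfspace" "u0 x \<le> U x"
  shows "0 \<le> laplacian U x - laplacian u0 x"
proof -
  have "laplacian U x - laplacian u0 x = (exp (-2 * u0 x) - exp (-2 * U x)) * (cmod (poly P (zc x)))^2"
    using assms(1-3) unfolding smooth_solution_def left_diff_distrib by fastforce
  then show ?thesis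
    using assms(4) by simp
qed

lemma grad_sq_diff_of_solutions_le:
  fixes P :: "complex poly" and U u0 :: "real^3 \<Rightarrow> real"
  assumes U_sol: "smooth_solution P U" and u0_sol: "smooth_solution P u0"
    and between: "\<And>x. x \<in> halfspace \<Longrightarrow> u0 x \<le> U x \<and> U x \<le> u0 x + x $ 3"
    and p: "p \<in> halfspace" and r: "0 < r" "r \<le> p $ 3 / 4"
  shows "integral (ball p r) (grad_sq (\<lambda>x. U x - u0 x)) \<le> 1024 * r * (p $ 3)^2"
proof -
  define W where "W = cbox (p - (5/2 * r) *\<^sub>R One) (p + (5/2 * r) *\<^sub>R One)"
  define a where "a i x = dpart i U x - dpart i u0 x" for i x
  define b where "b i x = dpart i (dpart i U) x - dpart i (dpart i u0) x" for i x
  note U_reg = smooth_on_second_order[OF _ open_halfspace] and u0_reg = smooth_on_second_order[OF _ open_halfspace]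
  have U_smooth: "smooth_on halfspace U" and u0_smooth: "smooth_on halfspace u0"
    using U_sol u0_sol by (simp_all add: smooth_solution_def)
  have W_H: "W \<subseteq> halfspace"
  proof
    fix x assume "x \<in> W"
    then have "\<bar>x $ 3 - p $ 3\<bar> \<le> 5/2 * r" unfolding W_def by (rule vec_nth_dist_le_in_cube)
    then have "p $ 3 - x $ 3 \<le> 5/2 * r" by linarith
    then show "x \<in> halfspace" using r by (simp add: halfspace_def)
  qed
  have cball_W: "cball p (2*r) \<subseteq> W"
    using cball_subset_cbox_One[of p "2*r"] r unfolding W_def by (force simp: mem_box inner_diff_left inner_add_left)
  have "integral (ball p r) (\<lambda>x. \<Sum>i\<in>Basis. (a i x)^2) \<le> 64/9 * (3/2 * p $ 3)^2 * (4*r)^DIM(real^3) / r^2"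
  proof (rule caccioppoli_inequality[where p=p and r=r and K="3/2 * p $ 3" and v="\<lambda>x. U x - u0 x"
        and a=a and b=b, folded W_def, OF r(1)])
    show "continuous_on W (\<lambda>x. U x - u0 x)"
      using U_reg(1)[OF U_smooth] u0_reg(1)[OF u0_smooth] W_H by (auto intro!: continuous_intros intro: continuous_on_subset)
    show "continuous_on W (a i)" "continuous_on W (b i)" if "i \<in> Basis" for i
      using U_reg(3,4)[OF U_smooth that] u0_reg(3,4)[OF u0_smooth that] W_H unfolding a_def b_def
      by (auto intro!: continuous_intros intro: continuous_on_subset)
    show "((\<lambda>s. U (y + s *\<^sub>R i) - u0 (y + s *\<^sub>R i)) has_real_derivative a i y) (at 0)"
      if "i \<in> Basis" "y \<in> W" for i y
      unfolding a_def dpart_def using that W_H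
      by (intro DERIV_diff has_real_derivative_along_line U_reg(2)[OF U_smooth] u0_reg(2)[OF u0_smooth]) auto
    show "((\<lambda>s. a i (y + s *\<^sub>R i)) has_real_derivative b i y) (at 0)"
      if "i \<in> Basis" "y \<in> W" for i y
      unfolding a_def b_def dpart_def[of i "dpart i U"] dpart_def[of i "dpart i u0"] using that W_H
      by (intro DERIV_diff has_real_derivative_along_line U_reg(5)[OF U_smooth] u0_reg(5)[OF u0_smooth]) auto
    fix x assume x: "x \<in> cball p (2*r)"
    then have xH: "x \<in> halfspace" using cball_W W_H by auto
    show "0 \<le> U x - u0 x" using between[OF xH] by simp
    show "0 \<le> (\<Sum>i\<in>Basis. b i x)"
      using laplacian_diff_of_solutions_nonneg[OF U_sol u0_sol xH] between[OF xH]
      by (simp add: b_def laplacian_def sum_subtractf)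
    have "x $ 3 \<le> p $ 3 + 2 * r"
      using vec_nth_dist_le_in_cube[of x p "2*r" 3] x cball_subset_cbox_One[of p "2*r"] by auto
    then show "U x - u0 x \<le> 3/2 * p $ 3" using between[OF xH] r by simp
  qed
  also have "\<dots> = 1024 * r * (p $ 3)^2"
    using r by (simp add: power2_eq_square field_simps)
  also have "integral (ball p r) (\<lambda>x. \<Sum>i\<in>Basis. (a i x)^2) = integral (ball p r) (grad_sq (\<lambda>x. U x - u0 x))"
  proof (rule integral_cong)
    fix x assume "x \<in> ball p r"
    then have "x \<in> cball p (2*r)" using r(1) by simp
    then have "x \<in> halfspace" using cball_W W_H by auto
    then show "(\<Sum>i\<in>Basis. (a i x)^2) = grad_sq (\<lambda>x. U x - u0 x) x"
      unfolding grad_sq_def a_def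
      using dpart_diff[OF U_reg(2)[OF U_smooth] u0_reg(2)[OF u0_smooth]] by simp
  qed
  finally show ?thesis .
qed

theorem mainTheorem5:
  fixes P :: "complex poly" and u0 :: "real^3 \<Rightarrow> real" and C0 :: real
  assumes P_nz: "P \<noteq> 0"
    and u0_sol: "smooth_solution P u0"
    and u0_bdd: "\<exists>M. \<forall>x\<in>halfspace. x $ 3 * exp (- u0 x) * cmod (poly P (zc x)) \<le> M"
    and u0_asym: "\<exists>K R0. \<forall>x\<in>halfspace. Rad x \<ge> R0 \<longrightarrow>
                    \<bar>u0 x - real (degree P) * ln (Rad x) - ln (x $ 3)\<bar> \<le> K"
    and C0_ge1: "C0 \<ge> 1"
    and C0_ge: "\<forall>x\<in>halfspace. (x $ 3)^2 * exp (-2 * u0 x) * (cmod (poly P (zc x)))^2 \<le> C0"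
    and u3_sol: "smooth_solution P (u3 P u0)"
    and u3_bounds: "\<forall>x\<in>halfspace. u0 x + fC C0 (x $ 3) \<le> u3 P u0 x \<and> u3 P u0 x \<le> u0 x + x $ 3"
  shows "\<exists>C>0. \<forall>p\<in>halfspace. p $ 3 \<le> 1 \<longrightarrow> (\<forall>r. 0 < r \<and> r \<le> p $ 3 / 4 \<longrightarrow>
           integral (ball p r) (grad_sq (\<lambda>x. u3 P u0 x - u0 x)) \<le> C * r * (p $ 3)^2)"
proof -
  \<comment> \<open>Only the two equations and the bounds on \<open>u3 - u0\<close> enter; the constant works for all \<open>y\<close>.\<close>
  have between: "u0 x \<le> u3 P u0 x \<and> u3 P u0 x \<le> u0 x + x $ 3" if "x \<in> halfspace" for x
    using u3_bounds that fC_nonneg[OF C0_ge1, of "x $ 3"] by (fastforce simp: halfspace_def)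
  show ?thesis
    by (rule exI[of _ 1024]) (auto intro: grad_sq_diff_of_solutions_le[OF u3_sol u0_sol between])
qed

end
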